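(* Let $G$ be a finite simple graph with edge weight function $w$ and vertex weight function $w_1$. Then all roots of $\eta_{(w,w_1)}(G,x)$ are real.
   Context: An edge weight function $w$ assigns a nonzero complex number to each edge; a vertex weight function $w_1$ assigns a real number (possibly $0$) to each vertex; induced subgraphs carry restricted weights. For $A\subseteq E(G)$, $w(A)=\prod_{e\in A}w(e)$. $\mu_w(G,x)=\sum_{M}(-1)^{|M|}|w(M)|^2x^{n-2|M|}$ over all matchings $M$ of $G$ (including empty), $n=|V(G)|$. $\eta_{(w,w_1)}(G,x)=\sum_{S\subseteq V(G)}(-1)^{|V(G)\setminus S|}\big(\prod_{v\in V(G)\setminus S}w_1(v)\big)\mu_w(G[S],x)$ with $G[S]$ the induced subgraph and $\mu_w$ of the empty graph equal to $1$. *)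

theory Defs
  imports "HOL-Computational_Algebra.Polynomial" Complex_Main
begin

definition simple_graph :: "'a set \<Rightarrow> 'a set set \<Rightarrow> bool" where
  "simple_graph V E \<longleftrightarrow> finite V \<and> (\<forall>e\<in>E. e \<subseteq> V \<and> card e = 2)"

definition matchings :: "'a set set \<Rightarrow> 'a set set set" where
  "matchings E = {M. M \<subseteq> E \<and> (\<forall>e\<in>M. \<forall>f\<in>M. e \<noteq> f \<longrightarrow> e \<inter> f = {})}"

definition induced_edges :: "'a set set \<Rightarrow> 'a set \<Rightarrow> 'a set set" where
  "induced_edges E S = {e\<in>E. e \<subseteq> S}"

definition mu_w :: "'a set \<Rightarrow> 'a set set \<Rightarrow> ('a set \<Rightarrow> complex) \<Rightarrow> real poly" where
  "mu_w V E w = (\<Sum>M\<in>matchings E.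
      monom ((-1) ^ card M * (cmod (\<Prod>e\<in>M. w e))\<^sup>2) (card V - 2 * card M))"

definition eta_w :: "'a set \<Rightarrow> 'a set set \<Rightarrow> ('a set \<Rightarrow> complex) \<Rightarrow> ('a \<Rightarrow> real) \<Rightarrow> real poly" where
  "eta_w V E w w1 = (\<Sum>S\<in>Pow V.
      smult ((-1) ^ card (V - S) * (\<Prod>v\<in>V - S. w1 v)) (mu_w S (induced_edges E S) w))"

end

theory Submission
  imports Defs
begin

text \<open>
  Evaluated at a complex number z, the polynomial eta equals the multivariate (Heilmann--Lieb)
  matching polynomial \<mu> with vertex values x v = z - w1 v and edge weights c e = |w e|^2:
  expanding the product of the factors z - w1 v over the vertices missed by a matching M, the
  pairs (M, T) with T a set of those vertices correspond to the pairs (S, M) with M a matching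
  of G[S]. Deleting a vertex u gives the recursion
  \<mu>(V) = x u * \<mu>(V - u) - (sum over edges e at u of c e * \<mu>(V - e)),
  so if all x v lie in the upper half-plane and all c e \<ge> 0, induction shows that every ratio
  \<mu>(V) / \<mu>(V - u) lies in the upper half-plane: each edge e = {u, v} contributes -c e divided
  by the ratio \<mu>(V - u) / \<mu>(V - u - v). Hence eta has no roots with positive imaginary part,
  and, having real coefficients, none with negative imaginary part either.
\<close>

definition matching_monomial ::
  "('a set \<Rightarrow> complex) \<Rightarrow> ('a \<Rightarrow> complex) \<Rightarrow> 'a set \<Rightarrow> 'a set set \<Rightarrow> complex" where
  "matching_monomial c x V M = (-1) ^ card M * (\<Prod>e\<in>M. c e) * (\<Prod>v\<in>V - \<Union>M. x v)"

definition multivariate_matching_poly ::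
  "'a set set \<Rightarrow> ('a set \<Rightarrow> complex) \<Rightarrow> ('a \<Rightarrow> complex) \<Rightarrow> 'a set \<Rightarrow> complex" where
  "multivariate_matching_poly E c x V =
     sum (matching_monomial c x V) (matchings (induced_edges E V))"

lemma finite_induced_edges: "finite V \<Longrightarrow> finite (induced_edges E V)"
  unfolding induced_edges_def by (rule finite_subset[of _ "Pow V"]) auto

lemma finite_matchings_induced_edges:
  "finite V \<Longrightarrow> finite (matchings (induced_edges E V))"
  unfolding matchings_def induced_edges_def
  by (rule finite_subset[of _ "Pow (Pow V)"]) auto

lemma finite_matching_induced_edges:
  "finite V \<Longrightarrow> M \<in> matchings (induced_edges E V) \<Longrightarrow> finite M"
  unfolding matchings_def using finite_induced_edges[of V E] by (auto intro: finite_subset)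

lemma Union_matching_subset: "M \<in> matchings (induced_edges E S) \<Longrightarrow> \<Union>M \<subseteq> S"
  by (auto simp: matchings_def induced_edges_def)

lemma card_Union_matching:
  assumes "\<forall>e\<in>E. card e = 2" and "M \<in> matchings E" and "finite M"
  shows "card (\<Union>M) = 2 * card M"
proof -
  have ME: "M \<subseteq> E" and disj: "\<forall>e\<in>M. \<forall>f\<in>M. e \<noteq> f \<longrightarrow> e \<inter> f = {}"
    using assms(2) by (auto simp: matchings_def)
  have "finite e" if "e \<in> M" for e
    using that ME assms(1) by (metis card.infinite subsetD zero_neq_numeral)
  then have "card (\<Union>M) = sum card M"
    using assms(3) disj by (intro card_Union_disjoint) (auto simp: pairwise_def disjnt_def)
  also have "\<dots> = 2 * card M"
    using ME assms(1) by (simp add: subset_iff)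
  finally show ?thesis .
qed

lemma multivariate_matching_poly_empty:
  "{} \<notin> E \<Longrightarrow> multivariate_matching_poly E c x {} = 1"
proof -
  assume "{} \<notin> E"
  then have "matchings (induced_edges E {}) = {{}}"
    by (auto simp: matchings_def induced_edges_def)
  then show ?thesis
    by (simp add: multivariate_matching_poly_def matching_monomial_def)
qed

lemma matching_monomial_uncovered_vertex:
  assumes "finite V" and "u \<in> V" and "\<Union>M \<subseteq> V - {u}"
  shows "matching_monomial c x V M = x u * matching_monomial c x (V - {u}) M"
proof -
  have "V - \<Union>M = insert u (V - {u} - \<Union>M)"
    using assms(2,3) by auto
  then show ?thesis
    using assms(1) by (simp add: matching_monomial_def)
qed

lemma matching_monomial_insert_edge:
  assumes "finite M" and "e \<notin> M"
  shows "matching_monomial c x V (insert e M) = - c e * matching_monomial c x (V - e) M"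
proof -
  have "V - \<Union>(insert e M) = V - e - \<Union>M" by auto
  then show ?thesis
    using assms by (simp add: matching_monomial_def)
qed

lemma matchings_avoiding_vertex:
  "{M \<in> matchings (induced_edges E V). u \<notin> \<Union>M} = matchings (induced_edges E (V - {u}))"
  by (auto simp: matchings_def induced_edges_def)

lemma matchings_covering_vertex:
  "{M \<in> matchings (induced_edges E V). u \<in> \<Union>M} =
     (\<Union>e\<in>{e\<in>induced_edges E V. u \<in> e}. insert e ` matchings (induced_edges E (V - e)))"
  (is "?L = ?R")
proof
  show "?L \<subseteq> ?R"
  proof
    fix M assume "M \<in> ?L"
    then obtain e where M: "M \<in> matchings (induced_edges E V)" "e \<in> M" "u \<in> e" by auto
    then have "M - {e} \<in> matchings (induced_edges E (V - e))"
      unfolding matchings_def induced_edges_def by blast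
    moreover have "e \<in> induced_edges E V"
      using M by (auto simp: matchings_def)
    ultimately show "M \<in> ?R"
      using M by (metis (mono_tags, lifting) image_eqI insert_Diff mem_Collect_eq UN_iff)
  qed
  show "?R \<subseteq> ?L"
    unfolding matchings_def induced_edges_def by blast
qed

lemma sum_matching_monomial_insert_edge:
  assumes "finite V" and "e \<noteq> {}"
  shows "sum (matching_monomial c x V) (insert e ` matchings (induced_edges E (V - e))) =
    - (c e * multivariate_matching_poly E c x (V - e))"
proof -
  let ?B = "matchings (induced_edges E (V - e))"
  have notin: "e \<notin> M" if "M \<in> ?B" for M
    using that assms(2) by (auto simp: matchings_def induced_edges_def)
  have "inj_on (insert e) ?B"
    by (rule inj_onI) (metis notin insert_ident)
  then have "sum (matching_monomial c x V) (insert e ` ?B) =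
      sum (matching_monomial c x V \<circ> insert e) ?B"
    by (rule sum.reindex)
  also have "\<dots> = (\<Sum>M\<in>?B. - c e * matching_monomial c x (V - e) M)"
    using assms(1) notin
    by (intro sum.cong refl) (simp add: matching_monomial_insert_edge finite_matching_induced_edges[of "V - e"])
  finally show ?thesis
    by (simp add: multivariate_matching_poly_def sum_distrib_left sum_negf)
qed

lemma multivariate_matching_poly_remove_vertex:
  assumes "finite V" and "{} \<notin> E" and "u \<in> V"
  shows "multivariate_matching_poly E c x V =
    x u * multivariate_matching_poly E c x (V - {u}) -
    (\<Sum>e\<in>{e\<in>induced_edges E V. u \<in> e}. c e * multivariate_matching_poly E c x (V - e))"
proof -
  let ?P = "multivariate_matching_poly E c x"
  let ?m = "matching_monomial c x V"
  let ?A = "matchings (induced_edges E V)"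
  let ?Eu = "{e\<in>induced_edges E V. u \<in> e}"
  have "?P V = sum ?m {M\<in>?A. u \<notin> \<Union>M} + sum ?m {M\<in>?A. u \<in> \<Union>M}"
    unfolding multivariate_matching_poly_def
    using assms(1) finite_matchings_induced_edges by (subst sum.union_disjoint[symmetric]) (auto intro: sum.cong)
  also have "sum ?m {M\<in>?A. u \<notin> \<Union>M} = x u * ?P (V - {u})"
    unfolding matchings_avoiding_vertex multivariate_matching_poly_def sum_distrib_left
    using assms(1,3) by (intro sum.cong refl matching_monomial_uncovered_vertex Union_matching_subset)
  also have "sum ?m {M\<in>?A. u \<in> \<Union>M} =
      (\<Sum>e\<in>?Eu. sum ?m (insert e ` matchings (induced_edges E (V - e))))"
    unfolding matchings_covering_vertex
  proof (rule sum.UNION_disjoint)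
    show "finite ?Eu"
      using assms(1) by (simp add: finite_induced_edges)
    show "\<forall>e\<in>?Eu. finite (insert e ` matchings (induced_edges E (V - e)))"
      using assms(1) by (simp add: finite_matchings_induced_edges)
    show "\<forall>e\<in>?Eu. \<forall>f\<in>?Eu. e \<noteq> f \<longrightarrow>
        insert e ` matchings (induced_edges E (V - e)) \<inter> insert f ` matchings (induced_edges E (V - f)) = {}"
    proof (intro ballI impI)
      fix e f assume e: "e \<in> ?Eu" and f: "f \<in> ?Eu" and "e \<noteq> f"
      have "f \<notin> M" if "M \<in> matchings (induced_edges E (V - e))" for M
        using that e f by (auto simp: matchings_def induced_edges_def)
      then show "insert e ` matchings (induced_edges E (V - e)) \<inter>
          insert f ` matchings (induced_edges E (V - f)) = {}"
        using \<open>e \<noteq> f\<close> by auto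
    qed
  qed
  also have "\<dots> = (\<Sum>e\<in>?Eu. - (c e * ?P (V - e)))"
    using assms(1,2) by (intro sum.cong refl sum_matching_monomial_insert_edge) auto
  finally show ?thesis
    by (simp add: sum_negf)
qed

lemma Im_divide_nonpos_if_nonneg_real:
  assumes "Im c = 0" and "0 \<le> Re c" and "0 < Im q"
  shows "Im (c / q) \<le> 0"
  using assms by (simp add: Im_divide divide_nonpos_nonneg)

lemma multivariate_matching_poly_nonzero_if_ratios:
  assumes "{} \<notin> E" and "\<And>u. u \<in> W \<Longrightarrow>
    0 < Im (multivariate_matching_poly E c x W / multivariate_matching_poly E c x (W - {u}))"
  shows "multivariate_matching_poly E c x W \<noteq> 0"
proof (cases "W = {}")
  case True
  then show ?thesis
    using assms(1) by (simp add: multivariate_matching_poly_empty)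
next
  case False
  then obtain u where "u \<in> W" by blast
  then show ?thesis
    using assms(2)[of u] by auto
qed

lemma multivariate_matching_poly_ratio_upper_half_plane:
  assumes "finite V" and "\<forall>e\<in>E. card e = 2"
    and c: "\<forall>e\<in>E. Im (c e) = 0 \<and> 0 \<le> Re (c e)" and x: "\<forall>v\<in>V. 0 < Im (x v)"
  shows "W \<subseteq> V \<Longrightarrow> u \<in> W \<Longrightarrow>
    0 < Im (multivariate_matching_poly E c x W / multivariate_matching_poly E c x (W - {u}))"
proof (induction "card W" arbitrary: W u rule: less_induct)
  case less
  let ?P = "multivariate_matching_poly E c x"
  let ?W' = "W - {u}"
  have no_empty_edge: "{} \<notin> E"
    using assms(2) by force
  have finite_W: "finite W"
    using less.prems(1) assms(1) by (rule finite_subset)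
  have IH: "0 < Im (?P ?W' / ?P (?W' - {v}))" if "v \<in> ?W'" for v
    using less.hyps[OF card_Diff1_less[OF finite_W less.prems(2)] _ that] less.prems(1) by blast
  have nonzero: "?P ?W' \<noteq> 0"
    using no_empty_edge IH by (rule multivariate_matching_poly_nonzero_if_ratios)
  have edge_term: "Im (c e * ?P (W - e) / ?P ?W') \<le> 0" if e: "e \<in> induced_edges E W" "u \<in> e" for e
  proof -
    obtain v where uv: "e = {u, v}" "v \<noteq> u"
      using e assms(2) by (auto simp: induced_edges_def card_2_iff doubleton_eq_iff)
    then have "v \<in> ?W'" and "W - e = ?W' - {v}"
      using e by (auto simp: induced_edges_def)
    then have "0 < Im (?P ?W' / ?P (W - e))"
      using IH by simp
    moreover have "Im (c e) = 0 \<and> 0 \<le> Re (c e)"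
      using e c by (auto simp: induced_edges_def)
    ultimately show ?thesis
      using Im_divide_nonpos_if_nonneg_real[of "c e" "?P ?W' / ?P (W - e)"] by simp
  qed
  have "?P W / ?P ?W' = x u - (\<Sum>e\<in>{e\<in>induced_edges E W. u \<in> e}. c e * ?P (W - e) / ?P ?W')"
    using multivariate_matching_poly_remove_vertex[OF finite_W no_empty_edge less.prems(2)] nonzero
    by (simp add: sum_divide_distrib diff_divide_distrib)
  then have "Im (?P W / ?P ?W') =
      Im (x u) - (\<Sum>e\<in>{e\<in>induced_edges E W. u \<in> e}. Im (c e * ?P (W - e) / ?P ?W'))"
    by (simp add: Im_sum)
  moreover have "(\<Sum>e\<in>{e\<in>induced_edges E W. u \<in> e}. Im (c e * ?P (W - e) / ?P ?W')) \<le> 0"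
    using edge_term by (intro sum_nonpos) blast
  moreover have "0 < Im (x u)"
    using x less.prems by blast
  ultimately show ?case
    by linarith
qed

lemma multivariate_matching_poly_nonzero:
  assumes "finite V" and "\<forall>e\<in>E. card e = 2"
    and "\<forall>e\<in>E. Im (c e) = 0 \<and> 0 \<le> Re (c e)" and "\<forall>v\<in>V. 0 < Im (x v)"
  shows "multivariate_matching_poly E c x V \<noteq> 0"
proof (rule multivariate_matching_poly_nonzero_if_ratios)
  show "{} \<notin> E"
    using assms(2) by force
qed (use multivariate_matching_poly_ratio_upper_half_plane[OF assms] in blast)

lemma map_poly_of_real_sum:
  "map_poly (of_real :: real \<Rightarrow> 'b::real_algebra_1) (sum f A) = (\<Sum>a\<in>A. map_poly of_real (f a))"
proof (induction A rule: infinite_finite_induct)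
  case (insert a A)
  have "map_poly (of_real :: real \<Rightarrow> 'b) (p + q) = map_poly of_real p + map_poly of_real q" for p q
    by (rule poly_eqI) (simp add: coeff_map_poly)
  then show ?case
    using insert by simp
qed simp_all

lemma sum_Pow_matchings_swap:
  assumes "finite V"
  shows "(\<Sum>S\<in>Pow V. \<Sum>M\<in>matchings (induced_edges E S). f S M) =
    (\<Sum>M\<in>matchings (induced_edges E V). \<Sum>T\<in>Pow (V - \<Union>M). f (T \<union> \<Union>M) M)"
proof -
  have "(\<Sum>S\<in>Pow V. \<Sum>M\<in>matchings (induced_edges E S). f S M) =
      (\<Sum>(S, M)\<in>Sigma (Pow V) (\<lambda>S. matchings (induced_edges E S)). f S M)"
    using assms by (intro sum.Sigma) (auto intro: finite_matchings_induced_edges finite_subset)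
  also have "\<dots> = (\<Sum>(M, T)\<in>Sigma (matchings (induced_edges E V)) (\<lambda>M. Pow (V - \<Union>M)). f (T \<union> \<Union>M) M)"
  proof (rule sum.reindex_bij_witness[where i = "\<lambda>(M, T). (T \<union> \<Union>M, M)" and j = "\<lambda>(S, M). (M, S - \<Union>M)"])
    fix a assume "a \<in> Sigma (Pow V) (\<lambda>S. matchings (induced_edges E S))"
    then obtain S M where a: "a = (S, M)" and S: "S \<subseteq> V" and M: "M \<in> matchings (induced_edges E S)"
      by blast
    moreover have "M \<in> matchings (induced_edges E V)"
      using M S by (auto simp: matchings_def induced_edges_def)
    ultimately show "(case (case a of (S, M) \<Rightarrow> (M, S - \<Union>M)) of (M, T) \<Rightarrow> (T \<union> \<Union>M, M)) = a"
      and "(case a of (S, M) \<Rightarrow> (M, S - \<Union>M)) \<in> Sigma (matchings (induced_edges E V)) (\<lambda>M. Pow (V - \<Union>M))"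
      and "(case (case a of (S, M) \<Rightarrow> (M, S - \<Union>M)) of (M, T) \<Rightarrow> f (T \<union> \<Union>M) M) = (case a of (S, M) \<Rightarrow> f S M)"
      using Union_matching_subset[OF M] by (auto simp: Un_absorb2)
  next
    fix b assume "b \<in> Sigma (matchings (induced_edges E V)) (\<lambda>M. Pow (V - \<Union>M))"
    then obtain M T where b: "b = (M, T)" and M: "M \<in> matchings (induced_edges E V)" and "T \<subseteq> V - \<Union>M"
      by blast
    moreover have "M \<in> matchings (induced_edges E (T \<union> \<Union>M))"
      using M by (auto simp: matchings_def induced_edges_def)
    ultimately show "(case (case b of (M, T) \<Rightarrow> (T \<union> \<Union>M, M)) of (S, M) \<Rightarrow> (M, S - \<Union>M)) = b"
      and "(case b of (M, T) \<Rightarrow> (T \<union> \<Union>M, M)) \<in> Sigma (Pow V) (\<lambda>S. matchings (induced_edges E S))"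
      using Union_matching_subset[OF M] by auto
  qed
  also have "\<dots> = (\<Sum>M\<in>matchings (induced_edges E V). \<Sum>T\<in>Pow (V - \<Union>M). f (T \<union> \<Union>M) M)"
    using assms by (intro sum.Sigma[symmetric]) (auto intro: finite_matchings_induced_edges)
  finally show ?thesis .
qed

lemma poly_eta_w_eq_multivariate_matching_poly:
  assumes "simple_graph V E"
  shows "poly (map_poly complex_of_real (eta_w V E w w1)) z =
    multivariate_matching_poly E (\<lambda>e. of_real ((cmod (w e))\<^sup>2)) (\<lambda>v. z - of_real (w1 v)) V"
proof -
  have finite_V: "finite V" and card_edge: "\<forall>e\<in>E. card e = 2"
    using assms by (auto simp: simple_graph_def)
  define term_eta where "term_eta S M = complex_of_real ((-1) ^ card (V - S) * (\<Prod>v\<in>V - S. w1 v)) *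
      (of_real ((-1) ^ card M * (cmod (\<Prod>e\<in>M. w e))\<^sup>2) * z ^ (card S - 2 * card M))" for S M
  define term_mmp where "term_mmp M T = (-1) ^ card M * (\<Prod>e\<in>M. complex_of_real ((cmod (w e))\<^sup>2)) *
      (z ^ card T * (\<Prod>v\<in>V - \<Union>M - T. - of_real (w1 v)))" for M T
  have "term_eta (T \<union> \<Union>M) M = term_mmp M T"
    if M: "M \<in> matchings (induced_edges E V)" and T: "T \<subseteq> V - \<Union>M" for M T
  proof -
    have finite_M: "finite M"
      using finite_V M by (rule finite_matching_induced_edges)
    have "M \<in> matchings E"
      using M by (auto simp: matchings_def induced_edges_def)
    then have "card (\<Union>M) = 2 * card M"
      using card_Union_matching[OF card_edge _ finite_M] by blast
    moreover have "card (T \<union> \<Union>M) = card T + card (\<Union>M)"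
      using T finite_V Union_matching_subset[OF M] by (intro card_Un_disjoint) (auto intro: finite_subset)
    ultimately have "card (T \<union> \<Union>M) = card T + 2 * card M"
      by simp
    moreover have "V - (T \<union> \<Union>M) = V - \<Union>M - T" by auto
    ultimately show ?thesis
      unfolding term_eta_def term_mmp_def
      by (simp add: prod_uminus of_real_prod prod_norm[symmetric] prod_power_distrib)
  qed
  then have "(\<Sum>S\<in>Pow V. \<Sum>M\<in>matchings (induced_edges E S). term_eta S M) =
      (\<Sum>M\<in>matchings (induced_edges E V). \<Sum>T\<in>Pow (V - \<Union>M). term_mmp M T)"
    unfolding sum_Pow_matchings_swap[OF finite_V] by simp
  moreover have "poly (map_poly complex_of_real (eta_w V E w w1)) z =
      (\<Sum>S\<in>Pow V. \<Sum>M\<in>matchings (induced_edges E S). term_eta S M)"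
    by (simp add: eta_w_def mu_w_def map_poly_of_real_sum poly_sum map_poly_smult map_poly_monom
        poly_monom term_eta_def sum_distrib_left)
  moreover have "(\<Prod>v\<in>V - \<Union>M. z - of_real (w1 v)) =
      (\<Sum>T\<in>Pow (V - \<Union>M). z ^ card T * (\<Prod>v\<in>V - \<Union>M - T. - of_real (w1 v)))" for M
    using prod_add[of "V - \<Union>M" "\<lambda>_. z" "\<lambda>v. - complex_of_real (w1 v)"] finite_V by simp
  ultimately show ?thesis
    by (simp add: multivariate_matching_poly_def matching_monomial_def term_mmp_def sum_distrib_left)
qed

lemma real_poly_roots_real_if_no_upper_half_plane_roots:
  assumes "\<And>y. 0 < Im y \<Longrightarrow> poly (map_poly complex_of_real p) y \<noteq> 0"
    and "poly (map_poly complex_of_real p) z = 0"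
  shows "Im z = 0"
proof (rule ccontr)
  have real_coeffs: "\<And>n. coeff (map_poly complex_of_real p) n \<in> \<real>"
    by (simp add: coeff_map_poly)
  assume "Im z \<noteq> 0"
  then have "0 < Im z \<or> 0 < Im (cnj z)"
    by auto
  moreover have "poly (map_poly complex_of_real p) (cnj z) = 0"
    using assms(2) real_poly_cnj_root_iff[OF real_coeffs] by blast
  ultimately show False
    using assms by blast
qed

theorem corollary3p4:
  fixes V :: "'a set" and E :: "'a set set"
    and w :: "'a set \<Rightarrow> complex" and w1 :: "'a \<Rightarrow> real"
  assumes "simple_graph V E"
    and "\<forall>e\<in>E. w e \<noteq> 0"
  shows "\<forall>z::complex. poly (map_poly complex_of_real (eta_w V E w w1)) z = 0 \<longrightarrow> Im z = 0"
proof (intro allI impI)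
  fix z :: complex
  assume root: "poly (map_poly complex_of_real (eta_w V E w w1)) z = 0"
  have "finite V" and "\<forall>e\<in>E. card e = 2"
    using assms(1) by (auto simp: simple_graph_def)
  have "poly (map_poly complex_of_real (eta_w V E w w1)) y \<noteq> 0" if "0 < Im y" for y
    unfolding poly_eta_w_eq_multivariate_matching_poly[OF assms(1)]
    using \<open>finite V\<close> \<open>\<forall>e\<in>E. card e = 2\<close> that by (intro multivariate_matching_poly_nonzero) auto
  then show "Im z = 0"
    using root by (rule real_poly_roots_real_if_no_upper_half_plane_roots)
qed

end
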